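(* If $J$ is a left (respectively, right) ideal in a C*-algebra, then $J$ possesses a contractive quasi-identity if and only if $J$ has a contractive right (respectively, left) identity. In this case, the contractive right (respectively, left) identity is the only contractive quasi-identity of $J$.
   Context: A quasi-identity of a ring $R$ is an element $e\in R$ with $r=er+re-ere$ for all $r\in R$; it is contractive if $\|e\|\le1$. Ideals are norm-closed. *)

theory Defs
  imports "HOL-Analysis.Analysis"
begin

text \<open>A (not necessarily unital) C*-algebra: a complete normed associative real algebra
  (type class), equipped with a compatible complex scalar multiplication scaleC and an
  involution star satisfying the C*-identity.\<close>

locale cstar_algebra =
  fixes scaleC :: "complex \<Rightarrow> 'a::{real_normed_algebra, banach} \<Rightarrow> 'a"
    and star :: "'a \<Rightarrow> 'a"
  assumes scaleC_add_right: "scaleC c (x + y) = scaleC c x + scaleC c y"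
    and scaleC_add_left: "scaleC (a + b) x = scaleC a x + scaleC b x"
    and scaleC_scaleC: "scaleC a (scaleC b x) = scaleC (a * b) x"
    and scaleC_of_real: "scaleC (complex_of_real r) x = scaleR r x"
    and norm_scaleC: "norm (scaleC c x) = cmod c * norm x"
    and mult_scaleC_left: "scaleC c x * y = scaleC c (x * y)"
    and mult_scaleC_right: "x * scaleC c y = scaleC c (x * y)"
    and star_add: "star (x + y) = star x + star y"
    and star_scaleC: "star (scaleC c x) = scaleC (cnj c) (star x)"
    and star_mult: "star (x * y) = star y * star x"
    and star_star: "star (star x) = x"
    and cstar_id: "norm (star x * x) = (norm x)\<^sup>2"

definition closed_csubspace :: "(complex \<Rightarrow> 'a::real_normed_vector \<Rightarrow> 'a) \<Rightarrow> 'a set \<Rightarrow> bool" where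
  "closed_csubspace scaleC J \<longleftrightarrow> closed J \<and> 0 \<in> J \<and>
     (\<forall>x\<in>J. \<forall>y\<in>J. x + y \<in> J) \<and> (\<forall>c. \<forall>x\<in>J. scaleC c x \<in> J)"

definition left_ideal :: "(complex \<Rightarrow> 'a::real_normed_algebra \<Rightarrow> 'a) \<Rightarrow> 'a set \<Rightarrow> bool" where
  "left_ideal scaleC J \<longleftrightarrow> closed_csubspace scaleC J \<and> (\<forall>a. \<forall>x\<in>J. a * x \<in> J)"

definition right_ideal :: "(complex \<Rightarrow> 'a::real_normed_algebra \<Rightarrow> 'a) \<Rightarrow> 'a set \<Rightarrow> bool" where
  "right_ideal scaleC J \<longleftrightarrow> closed_csubspace scaleC J \<and> (\<forall>a. \<forall>x\<in>J. x * a \<in> J)"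

definition quasi_identity :: "'a::ring set \<Rightarrow> 'a \<Rightarrow> bool" where
  "quasi_identity J e \<longleftrightarrow> e \<in> J \<and> (\<forall>r\<in>J. r = e * r + r * e - e * r * e)"

definition right_identity :: "'a::ring set \<Rightarrow> 'a \<Rightarrow> bool" where
  "right_identity J e \<longleftrightarrow> e \<in> J \<and> (\<forall>r\<in>J. r * e = r)"

definition left_identity :: "'a::ring set \<Rightarrow> 'a \<Rightarrow> bool" where
  "left_identity J e \<longleftrightarrow> e \<in> J \<and> (\<forall>r\<in>J. e * r = r)"

end

theory Submission
  imports Defs
begin

text \<open>If \<open>e\<close> is a contractive quasi-identity of a left ideal \<open>J\<close> and \<open>r \<in> J\<close>, put
  \<open>g = r - r e\<close>. Since \<open>r\<^sup>* r \<in> J\<close>, the quasi-identity equation gives \<open>e (r\<^sup>* g) = r\<^sup>* g\<close>.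
  A contraction fixing a vector is fixed by its adjoint as well, so also \<open>e\<^sup>* (r\<^sup>* g) = r\<^sup>* g\<close>;
  taking adjoints, \<open>g\<^sup>* r e = g\<^sup>* r\<close>, i.e. \<open>g\<^sup>* g = 0\<close>, hence \<open>r e = r\<close>.

  The adjoint fact reduces to: a selfadjoint contraction \<open>h\<close> with \<open>y\<^sup>* h y = y\<^sup>* y\<close> fixes \<open>y\<close>,
  because \<open>1 - h \<ge> 0\<close> and \<open>y\<^sup>* (1 - h) y = 0\<close>. Without unitization or order we use approximate
  square roots: for \<open>t < 1\<close> close to \<open>1\<close>, Banach's fixed point theorem yields a
  selfadjoint \<open>s\<close> with \<open>(1 - s)\<^sup>2 = 1 - t h\<close>, and then \<open>\<parallel>(1 - s) y\<parallel>\<^sup>2 = (1 - t) \<parallel>y\<parallel>\<^sup>2\<close>.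

  Contractive right identities are projections and hence unique. Right ideals are
  the images of left ideals under the involution.\<close>

lemma quasi_identity_eq_imp_fixes_left:
  fixes e r :: "'a::ring"
  assumes "r = e * r + r * e - e * r * e"
  shows "e * (r - r * e) = r - r * e"
proof -
  have "e * (r - r * e) = (e * r + r * e - e * r * e) - r * e"
    by (simp add: right_diff_distrib mult.assoc)
  with assms show ?thesis by simp
qed

lemma right_identity_imp_quasi_identity: "right_identity J f \<Longrightarrow> quasi_identity J f"
  unfolding right_identity_def quasi_identity_def by (simp add: mult.assoc)

lemma left_identity_imp_quasi_identity: "left_identity J f \<Longrightarrow> quasi_identity J f"
  unfolding left_identity_def quasi_identity_def by (simp add: mult.assoc[symmetric])

context cstar_algebra
begin

lemma star_scaleR: "star (scaleR r x) = scaleR r (star x)"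
  using star_scaleC[of "complex_of_real r" x] by (simp add: scaleC_of_real)

lemma norm_star: "norm (star x) = norm x"
proof -
  have le: "norm z \<le> norm (star z)" for z
  proof (cases "z = 0")
    case False
    have "(norm z)\<^sup>2 \<le> norm (star z) * norm z"
      using cstar_id[of z] norm_mult_ineq[of "star z" z] by simp
    with False show ?thesis by (simp add: power2_eq_square)
  qed simp
  show ?thesis using le[of x] le[of "star x"] by (simp add: star_star)
qed

lemma bounded_linear_star: "bounded_linear star"
  by (rule bounded_linear_intro[where K=1]) (auto simp: star_add star_scaleR norm_star)

lemma star_zero: "star 0 = 0"
  using linear_0[OF bounded_linear.linear[OF bounded_linear_star]] .

lemma star_diff: "star (x - y) = star x - star y"
  using linear_diff[OF bounded_linear.linear[OF bounded_linear_star]] .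

lemma star_mult_self_eq_zero_iff: "star x * x = 0 \<longleftrightarrow> x = 0"
  using cstar_id[of x] by auto

text \<open>In the unitization the conclusion reads \<open>(1 - s)\<^sup>2 = 1 - t h\<close> with \<open>t = 2\<rho> - \<rho>\<^sup>2\<close>.
  The element \<open>s\<close> is the fixed point of \<open>x \<mapsto> (t h + x\<^sup>2) / 2\<close>, a \<open>\<rho>\<close>-Lipschitz self-map of
  the selfadjoint part of the \<open>\<rho>\<close>-ball.\<close>

lemma selfadjoint_approx_sqrt_exists:
  assumes hs: "star h = h" and hn: "norm h \<le> 1" and \<rho>: "0 \<le> \<rho>" "\<rho> < 1"
  obtains s where "star s = s" "norm s \<le> \<rho>" "scaleR 2 s - s * s = scaleR (2 * \<rho> - \<rho>\<^sup>2) h"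
proof -
  define t where "t = 2 * \<rho> - \<rho>\<^sup>2"
  have t0: "0 \<le> t"
    using \<rho> mult_nonneg_nonneg[of \<rho> "2 - \<rho>"] unfolding t_def by (simp add: power2_eq_square algebra_simps)
  define S where "S = {x. star x = x} \<inter> {x. norm x \<le> \<rho>}"
  define f where "f x = scaleR (1/2) (scaleR t h + x * x)" for x
  have "closed S"
    unfolding S_def using linear_continuous_on[OF bounded_linear_star]
    by (intro closed_Int closed_Collect_eq closed_Collect_le continuous_intros) auto
  then have "complete S" by (simp add: complete_eq_closed)
  moreover have "S \<noteq> {}" using \<rho> star_zero unfolding S_def by auto
  moreover have "f ` S \<subseteq> S"
  proof clarify
    fix x assume x: "x \<in> S"
    have "norm (scaleR t h + x * x) \<le> t * norm h + norm x * norm x"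
      using norm_triangle_ineq[of "scaleR t h" "x * x"] norm_mult_ineq[of x x] t0 by simp
    also have "\<dots> \<le> t + \<rho> * \<rho>"
      using x hn t0 \<rho> unfolding S_def by (intro add_mono mult_mono) (auto intro: mult_left_le)
    also have "\<dots> = 2 * \<rho>" unfolding t_def by (simp add: power2_eq_square)
    finally show "f x \<in> S"
      using x unfolding S_def f_def by (simp add: star_scaleR star_add star_mult hs)
  qed
  moreover have "dist (f x) (f y) \<le> \<rho> * dist x y" if "x \<in> S" "y \<in> S" for x y
  proof -
    have "f x - f y = scaleR (1/2) ((x - y) * x + y * (x - y))"
      unfolding f_def by (simp add: algebra_simps)
    then have "norm (f x - f y) \<le> (1/2) * (norm (x - y) * norm x + norm y * norm (x - y))"
      using norm_triangle_ineq[of "(x - y) * x" "y * (x - y)"]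
        norm_mult_ineq[of "x - y" x] norm_mult_ineq[of y "x - y"] by simp
    also have "\<dots> \<le> (1/2) * (norm (x - y) * \<rho> + \<rho> * norm (x - y))"
      using that \<rho> unfolding S_def by (intro mult_left_mono add_mono mult_mono) auto
    finally show ?thesis by (simp add: dist_norm algebra_simps)
  qed
  ultimately obtain s where "s \<in> S" "f s = s"
    using Banach_fix[of S \<rho> f] \<rho> by blast
  moreover have "scaleR 2 s = scaleR t h + s * s"
    using arg_cong[OF \<open>f s = s\<close>, of "scaleR 2"] unfolding f_def by simp
  then have "scaleR 2 s - s * s = scaleR t h" by simp
  ultimately show thesis using that unfolding S_def t_def by auto
qed

lemma selfadjoint_contraction_fixes_approx:
  assumes hs: "star h = h" and hn: "norm h \<le> 1" and hy: "star y * h * y = star y * y"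
    and \<rho>: "0 \<le> \<rho>" "\<rho> < 1"
  shows "norm (h * y - y) \<le> (1 - \<rho>) * (norm (h * y) + 2 * norm y)"
proof -
  obtain s where ss: "star s = s" and sn: "norm s \<le> \<rho>"
    and se: "scaleR 2 s - s * s = scaleR (2 * \<rho> - \<rho>\<^sup>2) h"
    using selfadjoint_approx_sqrt_exists[OF hs hn \<rho>] .
  define t where "t = 2 * \<rho> - \<rho>\<^sup>2"
  have t: "1 - t = (1 - \<rho>)\<^sup>2" unfolding t_def by (simp add: power2_eq_square algebra_simps)
  define w where "w = y - s * y"
  have "star w * w = star y * y - star y * (scaleR 2 s - s * s) * y"
    unfolding w_def by (simp add: star_diff star_mult ss algebra_simps scaleR_2)
  also have "\<dots> = star y * y - scaleR t (star y * h * y)"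
    by (subst se) (simp add: t_def)
  also have "\<dots> = scaleR (1 - t) (star y * y)"
    using hy by (simp add: algebra_simps)
  finally have "(norm w)\<^sup>2 = ((1 - \<rho>) * norm y)\<^sup>2"
    using cstar_id[of w] cstar_id[of y] t by (simp add: power_mult_distrib)
  then have w: "norm w = (1 - \<rho>) * norm y"
    using \<rho> by (simp add: power2_eq_iff_nonneg)
  have "scaleR t (h * y) - y = s * w - w"
    using arg_cong[OF se, of "\<lambda>x. x * y"] unfolding w_def t_def by (simp add: algebra_simps scaleR_2)
  then have "norm (scaleR t (h * y) - y) \<le> \<rho> * norm w + norm w"
    using norm_triangle_ineq4[of "s * w" w] norm_mult_ineq[of s w]
      mult_right_mono[OF sn norm_ge_zero[of w]] by simp
  also have "\<dots> \<le> 2 * ((1 - \<rho>) * norm y)"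
    using \<rho> w by (simp add: mult_left_le_one_le)
  finally have tn: "norm (scaleR t (h * y) - y) \<le> 2 * ((1 - \<rho>) * norm y)" .
  have "norm (h * y - y) = norm (scaleR ((1 - \<rho>)\<^sup>2) (h * y) + (scaleR t (h * y) - y))"
    unfolding t[symmetric] by (simp add: algebra_simps)
  also have "\<dots> \<le> (1 - \<rho>)\<^sup>2 * norm (h * y) + norm (scaleR t (h * y) - y)"
    by (rule order_trans[OF norm_triangle_ineq]) simp
  also have "(1 - \<rho>)\<^sup>2 * norm (h * y) \<le> (1 - \<rho>) * norm (h * y)"
    using \<rho> by (intro mult_right_mono) (auto simp: power2_eq_square)
  finally show ?thesis using tn by (simp add: algebra_simps)
qed

lemma selfadjoint_contraction_fixes:
  assumes hs: "star h = h" and hn: "norm h \<le> 1" and hy: "star y * h * y = star y * y"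
  shows "h * y = y"
proof -
  define C where "C = norm (h * y) + 2 * norm y"
  have lim: "((\<lambda>\<rho>. (1 - \<rho>) * C) \<longlongrightarrow> (1 - 1) * C) (at_left 1)"
    by (intro tendsto_intros)
  have ev: "\<forall>\<^sub>F \<rho> in at_left 1. norm (h * y - y) \<le> (1 - \<rho>) * C"
    using selfadjoint_contraction_fixes_approx[OF hs hn hy] unfolding C_def
    by (auto intro: eventually_mono[OF eventually_at_left_real[of 0 "1::real"]])
  have "norm (h * y - y) \<le> (1 - 1) * C"
    using tendsto_le[OF trivial_limit_at_left_real lim tendsto_const ev] .
  then show ?thesis by simp
qed

lemma contraction_fixes_imp_star_fixes:
  assumes en: "norm e \<le> 1" and ey: "e * y = y"
  shows "star e * y = y"
proof -
  define h where "h = scaleR (1/2) (e + star e)"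
  have hs: "star h = h" unfolding h_def by (simp add: star_scaleR star_add star_star add.commute)
  have "norm h \<le> (1/2) * (norm e + norm (star e))"
    unfolding h_def using norm_triangle_ineq[of e "star e"] by simp
  with en have hn: "norm h \<le> 1" by (simp add: norm_star)
  have "star y * star e = star y" using arg_cong[OF ey, of star] by (simp add: star_mult)
  with ey have "star y * h * y = star y * y"
    unfolding h_def by (simp add: algebra_simps scaleR_2[symmetric])
  then have "h * y = y" by (rule selfadjoint_contraction_fixes[OF hs hn])
  moreover have "y + star e * y = scaleR 2 (h * y)"
    using ey unfolding h_def by (simp add: distrib_right)
  ultimately show ?thesis by (simp add: scaleR_2)
qed

lemma contractive_quasi_identity_imp_right_identity:
  fixes J :: "'a set"
  assumes J: "\<forall>a. \<forall>x\<in>J. a * x \<in> J" and qi: "quasi_identity J e" and en: "norm e \<le> 1"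
  shows "right_identity J e"
  unfolding right_identity_def
proof (intro conjI ballI)
  show "e \<in> J" using qi unfolding quasi_identity_def by blast
  fix r assume "r \<in> J"
  define g where "g = r - r * e"
  have "star r * r \<in> J" using J \<open>r \<in> J\<close> by blast
  with qi have "star r * r = e * (star r * r) + star r * r * e - e * (star r * r) * e"
    unfolding quasi_identity_def by blast
  moreover have "star r * g = star r * r - star r * r * e"
    unfolding g_def by (simp add: right_diff_distrib mult.assoc)
  ultimately have "e * (star r * g) = star r * g"
    by (simp add: quasi_identity_eq_imp_fixes_left)
  then have "star e * (star r * g) = star r * g"
    by (rule contraction_fixes_imp_star_fixes[OF en])
  then have "star (star e * (star r * g)) = star (star r * g)" by simp
  then have "star g * r * e = star g * r" by (simp add: star_mult star_star mult.assoc)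
  then have "star g * g = 0"
    unfolding g_def by (simp add: right_diff_distrib mult.assoc[symmetric])
  then show "r * e = r" unfolding g_def star_mult_self_eq_zero_iff by simp
qed

lemma contractive_right_identity_selfadjoint:
  fixes J :: "'a set"
  assumes "right_identity J e" "norm e \<le> 1"
  shows "star e = e"
proof -
  have "e * e = e" using assms(1) unfolding right_identity_def by blast
  then have ee: "star e * e = e" by (rule contraction_fixes_imp_star_fixes[OF assms(2)])
  then have "star e = star (star e * e)" by simp
  also have "\<dots> = star e * e" by (simp add: star_mult star_star)
  finally show ?thesis using ee by simp
qed

lemma contractive_right_identity_unique:
  fixes J :: "'a set"
  assumes "right_identity J e" "norm e \<le> 1" "right_identity J f" "norm f \<le> 1"
  shows "e = f"
proof -
  have "e * f = e" "f * e = f" using assms(1,3) unfolding right_identity_def by blast+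
  have "e = star (e * f)"
    using \<open>e * f = e\<close> contractive_right_identity_selfadjoint[OF assms(1,2)] by simp
  also have "\<dots> = f * e"
    by (simp add: star_mult contractive_right_identity_selfadjoint[OF assms(1,2)]
        contractive_right_identity_selfadjoint[OF assms(3,4)])
  finally show ?thesis using \<open>f * e = f\<close> by simp
qed

lemma left_ideal_contractive_quasi_identity_iff:
  fixes J :: "'a set"
  assumes "\<forall>a. \<forall>x\<in>J. a * x \<in> J"
  shows "(\<exists>e. quasi_identity J e \<and> norm e \<le> 1) \<longleftrightarrow> (\<exists>f. right_identity J f \<and> norm f \<le> 1)"
  using contractive_quasi_identity_imp_right_identity[OF assms] right_identity_imp_quasi_identity
  by blast

lemma left_ideal_contractive_quasi_identity_unique:
  fixes J :: "'a set"
  assumes "\<forall>a. \<forall>x\<in>J. a * x \<in> J" "right_identity J f" "norm f \<le> 1"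
    and "quasi_identity J e" "norm e \<le> 1"
  shows "e = f"
  using contractive_right_identity_unique[of J e f]
    contractive_quasi_identity_imp_right_identity[OF assms(1,4,5)] assms(2,3,5) by simp

lemma star_eq_star_iff: "star x = star y \<longleftrightarrow> x = y"
  by (metis star_star)

lemma left_closed_star_image:
  fixes J :: "'a set"
  assumes "\<forall>a. \<forall>x\<in>J. x * a \<in> J"
  shows "\<forall>a. \<forall>x\<in>star ` J. a * x \<in> star ` J"
proof clarify
  fix a x assume "x \<in> J"
  then have "x * star a \<in> J" using assms by blast
  moreover have "a * star x = star (x * star a)" by (simp add: star_mult star_star)
  ultimately show "a * star x \<in> star ` J" by (rule image_eqI[rotated])
qed

lemma quasi_identity_star_image:
  fixes J :: "'a set"
  assumes "quasi_identity J e"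
  shows "quasi_identity (star ` J) (star e)"
  unfolding quasi_identity_def
proof (intro conjI ballI)
  show "star e \<in> star ` J" using assms unfolding quasi_identity_def by blast
  fix r assume "r \<in> star ` J"
  then obtain x where x: "x \<in> J" and r: "r = star x" by blast
  have "star x = star (e * x + x * e - e * x * e)"
    using assms x unfolding quasi_identity_def by simp
  also have "\<dots> = star e * star x + star x * star e - star e * star x * star e"
    by (simp add: star_diff star_add star_mult mult.assoc)
  finally show "r = star e * r + r * star e - star e * r * star e" using r by simp
qed

lemma right_identity_star_image_iff:
  fixes J :: "'a set"
  shows "right_identity (star ` J) (star f) \<longleftrightarrow> left_identity J f"
proof -
  have "star f \<in> star ` J \<longleftrightarrow> f \<in> J"
    using star_eq_star_iff by (auto simp: image_iff)
  moreover have "(\<forall>r\<in>star ` J. r * star f = r) \<longleftrightarrow> (\<forall>x\<in>J. f * x = x)"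
    by (simp add: star_eq_star_iff flip: star_mult)
  ultimately show ?thesis unfolding right_identity_def left_identity_def by blast
qed

lemma right_ideal_contractive_quasi_identity_iff:
  fixes J :: "'a set"
  assumes "\<forall>a. \<forall>x\<in>J. x * a \<in> J"
  shows "(\<exists>e. quasi_identity J e \<and> norm e \<le> 1) \<longleftrightarrow> (\<exists>f. left_identity J f \<and> norm f \<le> 1)"
proof
  assume "\<exists>e. quasi_identity J e \<and> norm e \<le> 1"
  then obtain e where "quasi_identity J e" "norm e \<le> 1" by blast
  then have "right_identity (star ` J) (star e)"
    using contractive_quasi_identity_imp_right_identity[OF left_closed_star_image[OF assms]
        quasi_identity_star_image] by (simp add: norm_star)
  with \<open>norm e \<le> 1\<close> show "\<exists>f. left_identity J f \<and> norm f \<le> 1"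
    using right_identity_star_image_iff by blast
next
  assume "\<exists>f. left_identity J f \<and> norm f \<le> 1"
  then show "\<exists>e. quasi_identity J e \<and> norm e \<le> 1"
    using left_identity_imp_quasi_identity by blast
qed

lemma right_ideal_contractive_quasi_identity_unique:
  fixes J :: "'a set"
  assumes "\<forall>a. \<forall>x\<in>J. x * a \<in> J" "left_identity J f" "norm f \<le> 1"
    and "quasi_identity J e" "norm e \<le> 1"
  shows "e = f"
proof -
  have "right_identity (star ` J) (star f)"
    using assms(2) right_identity_star_image_iff by blast
  then have "star e = star f"
    using left_ideal_contractive_quasi_identity_unique[OF left_closed_star_image[OF assms(1)]]
      quasi_identity_star_image[OF assms(4)] assms(3,5) by (simp add: norm_star)
  then show ?thesis by (metis star_star)
qed

end

theorem corollary4p6: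
  fixes scaleC :: "complex \<Rightarrow> 'a::{real_normed_algebra, banach} \<Rightarrow> 'a"
    and star :: "'a \<Rightarrow> 'a"
    and J :: "'a set"
  assumes "cstar_algebra scaleC star"
  shows "(left_ideal scaleC J \<longrightarrow>
            ((\<exists>e. quasi_identity J e \<and> norm e \<le> 1) \<longleftrightarrow>
             (\<exists>f. right_identity J f \<and> norm f \<le> 1)) \<and>
            (\<forall>e f. right_identity J f \<and> norm f \<le> 1 \<and> quasi_identity J e \<and> norm e \<le> 1
                   \<longrightarrow> e = f))
       \<and> (right_ideal scaleC J \<longrightarrow>
            ((\<exists>e. quasi_identity J e \<and> norm e \<le> 1) \<longleftrightarrow>
             (\<exists>f. left_identity J f \<and> norm f \<le> 1)) \<and>
            (\<forall>e f. left_identity J f \<and> norm f \<le> 1 \<and> quasi_identity J e \<and> norm e \<le> 1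
                   \<longrightarrow> e = f))"
proof -
  interpret cstar_algebra scaleC star by (fact assms)
  show ?thesis
    unfolding left_ideal_def right_ideal_def
    using left_ideal_contractive_quasi_identity_iff[of J]
      left_ideal_contractive_quasi_identity_unique[of J]
      right_ideal_contractive_quasi_identity_iff[of J]
      right_ideal_contractive_quasi_identity_unique[of J]
    by blast
qed

end
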